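(* Let $z\ge1$ be an integer and $0<\overline\delta\le\tfrac12$. Consider the perfect binary tree of depth $z-1$: its nodes at depth $y\in\{0,\dots,z-1\}$ are the binary strings $v=(j_1,\dots,j_y)$ (the root is the empty string), and the ancestors of $v$ are its prefixes. Let $(B_v)_v$ be independent $\{0,1\}$-valued random variables with $\Pr(B_v=1)\le\overline\delta^{\,2^{z-y(v)}}$, where $y(v)$ is the depth of $v$. Define $X_v=2$ if $B_u=1$ for some strict ancestor $u$ of $v$; $X_v=1$ if $B_u=0$ for all strict ancestors $u$ of $v$ and $B_v=1$; and $X_v=0$ otherwise. For a set $\overline T$ of nodes define its node weight $W(\overline T)$ as the number of leaves (nodes of depth $z-1$) having an ancestor-or-self in $\overline T$. Let $\overline T$ be a set of nodes no two distinct elements of which are in ancestor/descendant relation. Then $$\Pr\bigl(X_v\in\{1,2\}\ \text{for all }v\in\overline T\bigr)\le4\cdot4^{|\overline T|}\,\overline\delta^{\,2W(\overline T)}.$$ In particular, if $\overline T$ consists of leaves only, then $$\Pr\bigl(X_v\in\{1,2\}\ \text{for all }v\in\overline T\bigr)\le(2\overline\delta)^{2|\overline T|}.$$ *)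

theory Defs
  imports "HOL-Probability.Probability" "HOL-Library.Sublist"
begin

text \<open>Nodes of the perfect binary tree of depth z-1: binary strings of length < z.
  Ancestors of a node are its prefixes; the depth of v is length v.\<close>
definition tree_nodes :: "nat \<Rightarrow> bool list set" where
  "tree_nodes z = {v. length v < z}"

definition tree_leaves :: "nat \<Rightarrow> bool list set" where
  "tree_leaves z = {v. length v = z - 1}"

definition Xval :: "(bool list \<Rightarrow> 'a \<Rightarrow> bool) \<Rightarrow> 'a \<Rightarrow> bool list \<Rightarrow> nat" where
  "Xval B \<omega> v = (if \<exists>u. strict_prefix u v \<and> B u \<omega> then 2
                  else if B v \<omega> then 1 else 0)"

definition node_weight :: "nat \<Rightarrow> bool list set \<Rightarrow> nat" where
  "node_weight z T = card {l \<in> tree_leaves z. \<exists>u\<in>T. prefix u l}"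

definition antichain_nodes :: "bool list set \<Rightarrow> bool" where
  "antichain_nodes T \<longleftrightarrow> (\<forall>u\<in>T. \<forall>v\<in>T. u \<noteq> v \<longrightarrow> \<not> prefix u v)"

end

theory Submission
  imports Defs
begin

(*
  Put x = delta^2, so a flag at depth d fires with probability at most x^(2^(z-1-d)).
  For a node r and an antichain T below r, let hit(r, T) be the event that every
  v in T has a flagged node u with r <= u <= v; for r the root this is the event of
  the theorem. Induction from the leaves upwards gives

    P(hit(r, T)) + sum_{i < |r|} x^(2^(z-1-i))  <=  4^|T| / 2 * x^W(T).

  The extra sum over the levels above r is at most x^(2^(z-1-|r|)), because the level
  bounds decrease doubly exponentially, and x^(2^(z-1-|r|)) <= x^W(T) since W(T) is at
  most the number of leaves below r. If r is in T, then T = {r} and both terms on the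
  left are at most that bound. Otherwise hit(r, T) is contained in
  {B_r} union (hit(r0, T0) inter hit(r1, T1)) for the two children. If only one child
  meets T, the cost of B_r is paid by the additional summand of the level sum at the
  child. If both do, the two events depend on disjoint sets of flags, so their
  probabilities multiply, the weights add, and the factor 4^|T| / 4 >= 4 absorbs the
  two remaining level bounds.
*)

lemma sum_power_two_power_le:
  fixes x :: real
  assumes "0 \<le> x" "x \<le> 1/4" "d \<le> n"
  shows "(\<Sum>i<d. x ^ 2 ^ (n - i)) \<le> x ^ 2 ^ (n - d)"
  using assms(3)
proof (induction d)
  case 0
  then show ?case using assms(1) by simp
next
  case (Suc d)
  define y where "y = x ^ 2 ^ (n - Suc d)"
  have "n - d = Suc (n - Suc d)" using Suc.prems by simp
  then have y_sq: "x ^ 2 ^ (n - d) = y\<^sup>2"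
    by (simp add: y_def power_mult[symmetric] mult.commute)
  have "y \<le> x" unfolding y_def using assms(1,2) by (intro power_decreasing[of 1, simplified]) auto
  have "0 \<le> y" unfolding y_def using assms(1) by simp
  have "y * y \<le> y * (1/4)" using \<open>y \<le> x\<close> \<open>0 \<le> y\<close> assms(2) by (intro mult_left_mono) auto
  then have "2 * y\<^sup>2 \<le> y" using \<open>0 \<le> y\<close> by (simp add: power2_eq_square)
  moreover have "(\<Sum>i<Suc d. x ^ 2 ^ (n - i)) \<le> 2 * x ^ 2 ^ (n - d)" using Suc by simp
  ultimately show ?case unfolding y_sq by (simp add: y_def)
qed

definition subtree :: "nat \<Rightarrow> bool list \<Rightarrow> bool list set" where
  "subtree z r = {v. prefix r v \<and> length v < z}"

lemma finite_tree_nodes: "finite (tree_nodes z)"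
proof -
  have "tree_nodes z \<subseteq> {xs. set xs \<subseteq> UNIV \<and> length xs \<le> z}"
    unfolding tree_nodes_def by auto
  then show ?thesis using finite_lists_length_le[of "UNIV :: bool set"] finite_subset by auto
qed

lemma subtree_subset_tree_nodes: "subtree z r \<subseteq> tree_nodes z"
  unfolding subtree_def tree_nodes_def by auto

lemma finite_subtree: "finite (subtree z r)"
  using finite_subset[OF subtree_subset_tree_nodes finite_tree_nodes] .

lemma subtree_Nil: "subtree z [] = tree_nodes z"
  unfolding subtree_def tree_nodes_def by simp

lemma subtree_minus_root:
  "subtree z r - {r} = subtree z (r @ [False]) \<union> subtree z (r @ [True])"
proof -
  have "prefix r v \<and> v \<noteq> r \<longleftrightarrow> prefix (r @ [False]) v \<or> prefix (r @ [True]) v" for v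
  proof
    assume "prefix r v \<and> v \<noteq> r"
    then obtain w where "v = r @ w" "w \<noteq> []" by (auto elim: prefixE)
    then have "prefix (r @ [hd w]) v" by (cases w) auto
    then show "prefix (r @ [False]) v \<or> prefix (r @ [True]) v" by (cases "hd w") auto
  qed (auto dest: prefix_snocD)
  then show ?thesis unfolding subtree_def by auto
qed

lemma subtree_children_disjoint: "subtree z (r @ [False]) \<inter> subtree z (r @ [True]) = {}"
  unfolding subtree_def by (auto simp: prefix_def)

lemma finite_tree_leaves: "finite (tree_leaves z)"
  by (rule finite_subset[OF _ finite_tree_nodes[of "Suc (z - 1)"]])
    (auto simp: tree_leaves_def tree_nodes_def)

lemma node_weight_subtree_le:
  assumes "T \<subseteq> subtree z r"
  shows "node_weight z T \<le> 2 ^ (z - 1 - length r)"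
proof -
  let ?S = "{s. set s \<subseteq> (UNIV :: bool set) \<and> length s = z - 1 - length r}"
  have "{l \<in> tree_leaves z. \<exists>u\<in>T. prefix u l} \<subseteq> (\<lambda>s. r @ s) ` ?S"
  proof
    fix l assume "l \<in> {l \<in> tree_leaves z. \<exists>u\<in>T. prefix u l}"
    then obtain u where "length l = z - 1" "u \<in> T" "prefix u l" unfolding tree_leaves_def by auto
    moreover from this have "prefix r l" using assms unfolding subtree_def by auto
    ultimately show "l \<in> (\<lambda>s. r @ s) ` ?S" by (auto simp: prefix_def)
  qed
  then have "node_weight z T \<le> card ((\<lambda>s. r @ s) ` ?S)" unfolding node_weight_def
    by (intro card_mono finite_imageI finite_lists_length_eq) auto
  also have "\<dots> \<le> card ?S" by (intro card_image_le finite_lists_length_eq) auto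
  finally show ?thesis using card_lists_length_eq[of "UNIV :: bool set"] by simp
qed

lemma node_weight_Un_children:
  assumes "T0 \<subseteq> subtree z (r @ [False])" "T1 \<subseteq> subtree z (r @ [True])"
  shows "node_weight z (T0 \<union> T1) = node_weight z T0 + node_weight z T1"
proof -
  let ?L = "\<lambda>T. {l \<in> tree_leaves z. \<exists>u\<in>T. prefix u l}"
  have leaves_below: "?L T \<subseteq> subtree z r'" if "T \<subseteq> subtree z r'" for T r'
    using that prefix_order.order_trans unfolding subtree_def tree_leaves_def by fastforce
  have "?L T0 \<inter> ?L T1 = {}"
    using leaves_below[OF assms(1)] leaves_below[OF assms(2)] subtree_children_disjoint by blast
  moreover have "finite (?L T)" for T using finite_tree_leaves by simp
  ultimately have "card (?L T0 \<union> ?L T1) = card (?L T0) + card (?L T1)"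
    by (intro card_Un_disjoint) auto
  moreover have "?L (T0 \<union> T1) = ?L T0 \<union> ?L T1" by auto
  ultimately show ?thesis unfolding node_weight_def by simp
qed

lemma node_weight_leaves:
  assumes "T \<subseteq> tree_leaves z"
  shows "node_weight z T = card T"
proof -
  have "prefix u l \<longleftrightarrow> u = l" if "u \<in> tree_leaves z" "l \<in> tree_leaves z" for u l
    using that unfolding tree_leaves_def by (auto simp: prefix_def)
  then have "{l \<in> tree_leaves z. \<exists>u\<in>T. prefix u l} = T" using assms by blast
  then show ?thesis unfolding node_weight_def by simp
qed

lemma antichain_nodes_subset: "antichain_nodes T \<Longrightarrow> S \<subseteq> T \<Longrightarrow> antichain_nodes S"
  unfolding antichain_nodes_def by blast

lemma antichain_containing_root:
  assumes "antichain_nodes T" "r \<in> T" "T \<subseteq> subtree z r"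
  shows "T = {r}"
proof -
  have "v = r" if "v \<in> T" for v
  proof -
    have "prefix r v" using assms(3) that unfolding subtree_def by auto
    then show "v = r" using assms(1,2) that unfolding antichain_nodes_def by metis
  qed
  then show ?thesis using assms(2) by blast
qed

locale indep_tree_flags = prob_space M for M :: "'a measure" +
  fixes B :: "bool list \<Rightarrow> 'a \<Rightarrow> bool" and z :: nat and x :: real
  assumes x_nonneg: "0 \<le> x" and x_le_quarter: "x \<le> 1/4"
    and indep_flags: "indep_vars (\<lambda>_. count_space UNIV) B (tree_nodes z)"
    and prob_flag_le: "v \<in> tree_nodes z \<Longrightarrow> prob {\<omega> \<in> space M. B v \<omega>} \<le> x ^ 2 ^ (z - 1 - length v)"
begin

definition flag_event :: "bool list \<Rightarrow> 'a set" where
  "flag_event u = {\<omega> \<in> space M. B u \<omega>}"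

definition hit_event :: "bool list \<Rightarrow> bool list set \<Rightarrow> 'a set" where
  "hit_event r T = {\<omega> \<in> space M. \<forall>v\<in>T. \<exists>u. prefix r u \<and> prefix u v \<and> B u \<omega>}"

definition path_bound :: "nat \<Rightarrow> real" where
  "path_bound d = (\<Sum>i<d. x ^ 2 ^ (z - 1 - i))"

lemma indep_flag_events: "indep_events flag_event (tree_nodes z)"
  unfolding flag_event_def by (rule indep_eventsI_indep_vars[OF indep_flags]) simp

lemma flag_event_in_events: "u \<in> tree_nodes z \<Longrightarrow> flag_event u \<in> events"
  using indep_flag_events unfolding indep_events_def by auto

lemma hit_event_empty: "hit_event r {} = space M"
  unfolding hit_event_def by simp

lemma hit_event_subset_space: "hit_event r T \<subseteq> space M"
  unfolding hit_event_def by blast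

lemma hit_event_root: "hit_event r {r} = flag_event r"
proof -
  have "(\<exists>u. prefix r u \<and> prefix u r \<and> B u \<omega>) \<longleftrightarrow> B r \<omega>" for \<omega>
    using prefix_order.antisym by blast
  then show ?thesis unfolding hit_event_def flag_event_def by simp
qed

lemma hit_event_Un: "hit_event r (T \<union> T') = hit_event r T \<inter> hit_event r T'"
  unfolding hit_event_def by auto

lemma hit_event_in_sigma_subtree:
  assumes "T \<noteq> {}" "T \<subseteq> subtree z r"
  shows "hit_event r T \<in> sigma_sets (space M) (flag_event ` subtree z r)"
proof -
  interpret S: sigma_algebra "space M" "sigma_sets (space M) (flag_event ` subtree z r)"
    by (rule sigma_algebra_sigma_sets) (auto simp: flag_event_def)
  have "hit_event r T = (\<Inter>v\<in>T. \<Union>u\<in>{u. prefix r u \<and> prefix u v}. flag_event u)"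
    using assms(1) unfolding hit_event_def flag_event_def by auto
  also have "\<dots> \<in> sigma_sets (space M) (flag_event ` subtree z r)"
  proof (intro S.finite_INT S.finite_UN)
    show "finite T" using assms(2) finite_subtree by (rule finite_subset)
    show "finite {u. prefix r u \<and> prefix u v}" for v
      by (rule finite_subset[of _ "set (prefixes v)"]) auto
    fix v u assume "v \<in> T" "u \<in> {u. prefix r u \<and> prefix u v}"
    then have "u \<in> subtree z r"
      using assms(2) prefix_length_le[of u v] unfolding subtree_def by fastforce
    then show "flag_event u \<in> sigma_sets (space M) (flag_event ` subtree z r)" by auto
  qed (use assms(1) in auto)
  finally show ?thesis .
qed

lemma hit_event_in_events:
  assumes "T \<subseteq> subtree z r"
  shows "hit_event r T \<in> events"
proof (cases "T = {}")
  case False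
  have "sigma_sets (space M) (flag_event ` subtree z r) \<subseteq> events"
    using flag_event_in_events subtree_subset_tree_nodes by (intro sets.sigma_sets_subset) auto
  then show ?thesis using hit_event_in_sigma_subtree[OF False assms] by auto
qed (simp add: hit_event_empty)

lemma prob_hit_event_children:
  assumes "T0 \<noteq> {}" "T0 \<subseteq> subtree z (r @ [False])" "T1 \<noteq> {}" "T1 \<subseteq> subtree z (r @ [True])"
  shows "prob (hit_event (r @ [False]) T0 \<inter> hit_event (r @ [True]) T1)
    = prob (hit_event (r @ [False]) T0) * prob (hit_event (r @ [True]) T1)"
proof -
  define F where "F b = sigma_sets (space M) (\<Union>u\<in>subtree z (r @ [b]). {flag_event u})" for b
  have "indep_sets F UNIV"
    unfolding F_def
  proof (rule indep_sets_collect_sigma)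
    have "(\<Union>b\<in>UNIV. subtree z (r @ [b])) \<subseteq> tree_nodes z"
      by (simp add: UN_subset_iff subtree_subset_tree_nodes)
    then show "indep_sets (\<lambda>u. {flag_event u}) (\<Union>b\<in>UNIV. subtree z (r @ [b]))"
      by (rule indep_sets_mono_index[OF _ indep_flag_events[unfolded indep_events_def_alt]])
    show "disjoint_family_on (\<lambda>b. subtree z (r @ [b])) UNIV"
      using subtree_children_disjoint unfolding disjoint_family_on_def by (auto simp: UNIV_bool)
    show "Int_stable {flag_event u}" for u
      by (rule Int_stableI) simp
  qed
  moreover have "case_bool (F True) (F False) = F"
    by (rule ext) (simp split: bool.split)
  ultimately have "indep_set (F True) (F False)"
    unfolding indep_set_def by simp
  moreover have "hit_event (r @ [True]) T1 \<in> F True" "hit_event (r @ [False]) T0 \<in> F False"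
    using hit_event_in_sigma_subtree assms by (simp_all add: F_def UNION_singleton_eq_range)
  ultimately show ?thesis
    by (metis indep_setD Int_commute mult.commute)
qed

lemma hit_event_subset_child:
  assumes "T \<subseteq> subtree z (r @ [b])"
  shows "hit_event r T \<subseteq> flag_event r \<union> hit_event (r @ [b]) T"
proof
  fix \<omega> assume \<omega>: "\<omega> \<in> hit_event r T"
  show "\<omega> \<in> flag_event r \<union> hit_event (r @ [b]) T"
  proof (cases "B r \<omega>")
    case False
    have "\<exists>u. prefix (r @ [b]) u \<and> prefix u v \<and> B u \<omega>" if v: "v \<in> T" for v
    proof -
      obtain u where u: "prefix r u" "prefix u v" "B u \<omega>" using \<omega> v unfolding hit_event_def by auto
      have "prefix (r @ [b]) v" using assms v unfolding subtree_def by auto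
      then have "prefix (r @ [b]) u \<or> prefix u (r @ [b])" using u(2) by (rule prefix_same_cases)
      moreover have "u \<noteq> r" using u False by auto
      ultimately have "prefix (r @ [b]) u" using u(1) prefix_order.antisym by auto
      then show ?thesis using u by blast
    qed
    then show ?thesis using \<omega> unfolding hit_event_def by auto
  qed (use \<omega> in \<open>auto simp: hit_event_def flag_event_def\<close>)
qed

lemma hit_event_split:
  assumes "r \<notin> T" "T \<subseteq> subtree z r"
  shows "hit_event r T \<subseteq> flag_event r \<union>
    (hit_event (r @ [False]) (T \<inter> subtree z (r @ [False])) \<inter> hit_event (r @ [True]) (T \<inter> subtree z (r @ [True])))"
proof -
  have "T \<inter> subtree z (r @ [False]) \<union> T \<inter> subtree z (r @ [True]) = T"
    using assms subtree_minus_root[of z r] by blast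
  then have "hit_event r T = hit_event r (T \<inter> subtree z (r @ [False])) \<inter> hit_event r (T \<inter> subtree z (r @ [True]))"
    using hit_event_Un[of r "T \<inter> subtree z (r @ [False])" "T \<inter> subtree z (r @ [True])"] by argo
  moreover have "hit_event r (T \<inter> subtree z (r @ [b])) \<subseteq> flag_event r \<union> hit_event (r @ [b]) (T \<inter> subtree z (r @ [b]))" for b
    by (rule hit_event_subset_child) simp
  ultimately show ?thesis by blast
qed

lemma path_bound_Suc: "path_bound (Suc d) = path_bound d + x ^ 2 ^ (z - 1 - d)"
  by (simp add: path_bound_def)

lemma path_bound_nonneg: "0 \<le> path_bound d"
  using x_nonneg by (simp add: path_bound_def sum_nonneg)

lemma path_bound_le: "d < z \<Longrightarrow> path_bound d \<le> x ^ 2 ^ (z - 1 - d)"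
  unfolding path_bound_def using sum_power_two_power_le[OF x_nonneg x_le_quarter, of d "z - 1"] by simp

lemma level_bound_le_weight: "T \<subseteq> subtree z r \<Longrightarrow> x ^ 2 ^ (z - 1 - length r) \<le> x ^ node_weight z T"
  using node_weight_subtree_le x_nonneg x_le_quarter by (intro power_decreasing) auto

lemma prob_hit_event_split:
  assumes "r \<notin> T" "T \<subseteq> subtree z r" "length r < z"
  shows "prob (hit_event r T) \<le> x ^ 2 ^ (z - 1 - length r) +
    prob (hit_event (r @ [False]) (T \<inter> subtree z (r @ [False])) \<inter> hit_event (r @ [True]) (T \<inter> subtree z (r @ [True])))"
    (is "_ \<le> _ + prob ?H")
proof -
  have r_node: "r \<in> tree_nodes z" using assms(3) by (simp add: tree_nodes_def)
  have "?H \<in> events" by (intro sets.Int hit_event_in_events) auto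
  then have "prob (hit_event r T) \<le> prob (flag_event r) + prob ?H"
    using hit_event_split[OF assms(1,2)] flag_event_in_events[OF r_node]
    by (intro order_trans[OF finite_measure_mono measure_Un_le]) auto
  then show ?thesis using prob_flag_le[OF r_node] unfolding flag_event_def by simp
qed

definition hit_bound :: "bool list set \<Rightarrow> real" where
  "hit_bound T = 4 ^ card T / 2 * x ^ node_weight z T"

lemma hit_bound_nonneg: "0 \<le> hit_bound T"
  using x_nonneg by (simp add: hit_bound_def)

lemma hit_bound_children:
  assumes "T0 \<noteq> {}" "T0 \<subseteq> subtree z (r @ [False])" "T1 \<noteq> {}" "T1 \<subseteq> subtree z (r @ [True])"
  shows "2 * x ^ node_weight z (T0 \<union> T1) + hit_bound T0 * hit_bound T1 \<le> hit_bound (T0 \<union> T1)"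
proof -
  have "finite T0" "finite T1" using assms(2,4) finite_subtree finite_subset by blast+
  moreover have "T0 \<inter> T1 = {}" using assms(2,4) subtree_children_disjoint by blast
  ultimately have card_Un: "card (T0 \<union> T1) = card T0 + card T1" by (rule card_Un_disjoint)
  have "card T0 \<ge> 1" "card T1 \<ge> 1"
    using assms(1,3) \<open>finite T0\<close> \<open>finite T1\<close> by (simp_all add: Suc_le_eq card_gt_0_iff)
  then have "(4::real) ^ 2 \<le> 4 ^ card (T0 \<union> T1)"
    unfolding card_Un by (intro power_increasing) auto
  then have "2 * x ^ node_weight z (T0 \<union> T1) \<le> 4 ^ card (T0 \<union> T1) / 4 * x ^ node_weight z (T0 \<union> T1)"
    using x_nonneg by (intro mult_right_mono) auto
  moreover have "hit_bound T0 * hit_bound T1 = 4 ^ card (T0 \<union> T1) / 4 * x ^ node_weight z (T0 \<union> T1)"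
    unfolding hit_bound_def card_Un node_weight_Un_children[OF assms(2,4)] by (simp add: power_add)
  ultimately show ?thesis unfolding hit_bound_def by linarith
qed

lemma prob_hit_event_le_step:
  assumes "r \<notin> T" "T \<noteq> {}" "T \<subseteq> subtree z r" "length r < z"
    and IH: "\<And>b. T \<inter> subtree z (r @ [b]) \<noteq> {} \<Longrightarrow>
      prob (hit_event (r @ [b]) (T \<inter> subtree z (r @ [b]))) + path_bound (Suc (length r))
        \<le> hit_bound (T \<inter> subtree z (r @ [b]))"
  shows "prob (hit_event r T) + path_bound (length r) \<le> hit_bound T"
proof -
  define Tc where "Tc b = T \<inter> subtree z (r @ [b])" for b
  let ?q = "x ^ 2 ^ (z - 1 - length r)"
  have T_eq: "T = Tc False \<union> Tc True"
    using assms(1,3) subtree_minus_root[of z r] unfolding Tc_def by blast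
  have Tc_sub: "Tc b \<subseteq> subtree z (r @ [b])" for b unfolding Tc_def by blast
  have split: "prob (hit_event r T) \<le> ?q + prob (hit_event (r @ [False]) (Tc False) \<inter> hit_event (r @ [True]) (Tc True))"
    using prob_hit_event_split[OF assms(1,3,4)] unfolding Tc_def .
  have path: "path_bound (length r) \<le> ?q" using path_bound_le[OF assms(4)] .
  have q_W: "?q \<le> x ^ node_weight z T" using level_bound_le_weight[OF assms(3)] .
  consider (one_child) b where "Tc (\<not> b) = {}" | (two_children) "Tc False \<noteq> {}" "Tc True \<noteq> {}"
    using that(1)[of True] that(1)[of False] that(2) by auto
  then show ?thesis
  proof cases
    case one_child
    then have "T = Tc b" using T_eq by (cases b) auto
    moreover have "hit_event (r @ [False]) (Tc False) \<inter> hit_event (r @ [True]) (Tc True) = hit_event (r @ [b]) (Tc b)"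
      using one_child hit_event_subset_space by (cases b) (auto simp: hit_event_empty)
    ultimately show ?thesis
      using split IH[of b] path_bound_Suc[of "length r"] assms(2) unfolding Tc_def by auto
  next
    case two_children
    have P_le: "prob (hit_event (r @ [b]) (Tc b)) \<le> hit_bound (Tc b)" if "Tc b \<noteq> {}" for b
      using IH[OF that[unfolded Tc_def]] path_bound_nonneg[of "Suc (length r)"] unfolding Tc_def by linarith
    have "prob (hit_event (r @ [False]) (Tc False) \<inter> hit_event (r @ [True]) (Tc True))
        = prob (hit_event (r @ [False]) (Tc False)) * prob (hit_event (r @ [True]) (Tc True))"
      using two_children Tc_sub by (intro prob_hit_event_children)
    also have "\<dots> \<le> hit_bound (Tc False) * hit_bound (Tc True)"
      using P_le two_children hit_bound_nonneg by (intro mult_mono) auto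
    finally show ?thesis
      using split path q_W hit_bound_children[OF two_children(1) Tc_sub two_children(2) Tc_sub] T_eq
      by simp
  qed
qed

lemma prob_hit_event_le:
  assumes "T \<noteq> {}" "T \<subseteq> subtree z r" "antichain_nodes T"
  shows "prob (hit_event r T) + path_bound (length r) \<le> hit_bound T"
  using assms
proof (induction "z - length r" arbitrary: r T rule: less_induct)
  case less
  obtain v where "v \<in> T" using less.prems(1) by blast
  then have "prefix r v" "length v < z" using less.prems(2) unfolding subtree_def by auto
  then have "length r < z" using prefix_length_le by (metis order.strict_trans1)
  show ?case
  proof (cases "r \<in> T")
    case True
    then have "T = {r}" using antichain_containing_root[OF less.prems(3) _ less.prems(2)] by simp
    moreover have "prob (flag_event r) \<le> x ^ 2 ^ (z - 1 - length r)"
      using prob_flag_le \<open>length r < z\<close> by (simp add: flag_event_def tree_nodes_def)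
    moreover note path_bound_le[OF \<open>length r < z\<close>] level_bound_le_weight[OF less.prems(2)]
    ultimately show ?thesis by (simp add: hit_event_root hit_bound_def)
  next
    case False
    show ?thesis
    proof (rule prob_hit_event_le_step[OF False less.prems(1,2) \<open>length r < z\<close>])
      fix b
      have "z - length (r @ [b]) < z - length r" using \<open>length r < z\<close> by simp
      moreover have "antichain_nodes (T \<inter> subtree z (r @ [b]))"
        by (rule antichain_nodes_subset[OF less.prems(3)]) blast
      ultimately show "T \<inter> subtree z (r @ [b]) \<noteq> {} \<Longrightarrow>
        prob (hit_event (r @ [b]) (T \<inter> subtree z (r @ [b]))) + path_bound (Suc (length r))
          \<le> hit_bound (T \<inter> subtree z (r @ [b]))"
        using less.hyps[of "r @ [b]" "T \<inter> subtree z (r @ [b])"] by simp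
    qed
  qed
qed

lemma Xval_positive_eq_hit_event:
  "{\<omega> \<in> space M. \<forall>v\<in>T. Xval B \<omega> v \<in> {1, 2}} = hit_event [] T"
  unfolding hit_event_def Xval_def by (auto simp: strict_prefix_def)

end

lemma indep_tree_flags_square:
  fixes \<delta> :: real
  assumes "prob_space M" "0 < \<delta>" "\<delta> \<le> 1/2"
    and "prob_space.indep_vars M (\<lambda>_. count_space UNIV) B (tree_nodes z)"
    and "\<forall>v\<in>tree_nodes z. measure M {\<omega> \<in> space M. B v \<omega>} \<le> \<delta> ^ (2 ^ (z - length v))"
  shows "indep_tree_flags M B z (\<delta>\<^sup>2)"
proof -
  have "\<delta>\<^sup>2 \<le> (1/2)\<^sup>2" using assms(2,3) by (intro power_mono) auto
  moreover have "\<delta> ^ 2 ^ (z - length v) = (\<delta>\<^sup>2) ^ 2 ^ (z - 1 - length v)" if "v \<in> tree_nodes z" for v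
  proof -
    have "z - length v = Suc (z - 1 - length v)" using that by (simp add: tree_nodes_def)
    then show ?thesis by (simp add: power_mult[symmetric] mult.commute)
  qed
  ultimately show ?thesis
    using assms unfolding indep_tree_flags_def indep_tree_flags_axioms_def by (simp add: power2_eq_square)
qed

theorem mainTheorem5:
  fixes M :: "'a measure" and B :: "bool list \<Rightarrow> 'a \<Rightarrow> bool"
    and z :: nat and \<delta> :: real and T :: "bool list set"
  assumes "prob_space M"
    and "z \<ge> 1"
    and "0 < \<delta>" and "\<delta> \<le> 1/2"
    and "prob_space.indep_vars M (\<lambda>_. count_space UNIV) B (tree_nodes z)"
    and "\<forall>v\<in>tree_nodes z. measure M {\<omega> \<in> space M. B v \<omega>} \<le> \<delta> ^ (2 ^ (z - length v))"
    and "T \<subseteq> tree_nodes z"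
    and "antichain_nodes T"
  shows "measure M {\<omega> \<in> space M. \<forall>v\<in>T. Xval B \<omega> v \<in> {1, 2}}
           \<le> 4 * 4 ^ card T * \<delta> ^ (2 * node_weight z T)
       \<and> (T \<subseteq> tree_leaves z \<longrightarrow>
         measure M {\<omega> \<in> space M. \<forall>v\<in>T. Xval B \<omega> v \<in> {1, 2}}
           \<le> (2 * \<delta>) ^ (2 * card T))"
proof -
  interpret indep_tree_flags M B z "\<delta>\<^sup>2"
    using indep_tree_flags_square assms(1,3-6) .
  show ?thesis
  proof (cases "T = {}")
    case True
    then show ?thesis by (simp add: Xval_positive_eq_hit_event hit_event_empty node_weight_def prob_space)
  next
    case False
    define a where "a = 4 ^ card T * \<delta> ^ (2 * node_weight z T)"
    have "prob (hit_event [] T) \<le> a / 2"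
      using prob_hit_event_le[OF False assms(7)[folded subtree_Nil] assms(8)]
      by (simp add: a_def hit_bound_def path_bound_def power_mult)
    moreover have "0 \<le> a" unfolding a_def by (simp add: power_mult)
    moreover have "(2 * \<delta>) ^ (2 * card T) = a" if "T \<subseteq> tree_leaves z"
      unfolding a_def node_weight_leaves[OF that] by (simp add: power_mult power_mult_distrib)
    moreover have "4 * 4 ^ card T * \<delta> ^ (2 * node_weight z T) = 4 * a" by (simp add: a_def)
    ultimately show ?thesis
      unfolding Xval_positive_eq_hit_event by auto
  qed
qed

end
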